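(* Let $\mathcal{I}\in\mathrm{Ins}(\Omega,\mathcal{H},\mathcal{K})$ be an indecomposable instrument. Then a POVM $\mathsf{B}\in\mathcal{O}(\Lambda,\mathcal{H})$ is compatible with $\mathcal{I}$ if and only if $\mathsf{B}\preceq\mathsf{A}^{\mathcal{I}}$.
   Context: All Hilbert spaces are finite-dimensional and complex, and all outcome sets are finite. A POVM $\mathsf{A}\in\mathcal{O}(\Omega,\mathcal{H})$ is a map $x\mapsto\mathsf{A}(x)$ to positive operators with $\sum_x\mathsf{A}(x)=I$. For POVMs, $\mathsf{B}\preceq\mathsf{A}$ (with $\mathsf{B}\in\mathcal{O}(\Lambda,\mathcal{H})$, $\mathsf{A}\in\mathcal{O}(\Omega,\mathcal{H})$) means there is a stochastic matrix $(\nu_{xy})_{x\in\Omega,y\in\Lambda}$ ($\nu_{xy}\ge0$, $\sum_y\nu_{xy}=1$) with $\mathsf{B}(y)=\sum_x\nu_{xy}\mathsf{A}(x)$. An instrument $\mathcal{I}\in\mathrm{Ins}(\Omega,\mathcal{H},\mathcal{K})$ is a family $(\mathcal{I}_x)_{x\in\Omega}$ of completely positive trace-nonincreasing linear maps $\mathcal{L}(\mathcal{H})\to\mathcal{L}(\mathcal{K})$ whose sum is trace preserving; its induced POVM is given by $\mathrm{tr}[\mathsf{A}^{\mathcal{I}}(x)\varrho]=\mathrm{tr}[\mathcal{I}_x(\varrho)]$. $\mathcal{I}$ is indecomposable if each nonzero $\mathcal{I}_x$ has Kraus rank 1, i.e. $\mathcal{I}_x(\varrho)=K_x\varrho K_x^*$.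 An instrument $\mathcal{I}\in\mathrm{Ins}(\Omega,\mathcal{H},\mathcal{K})$ and a POVM $\mathsf{B}\in\mathcal{O}(\Lambda,\mathcal{H})$ are compatible if there is $\mathcal{G}\in\mathrm{Ins}(\Omega\times\Lambda,\mathcal{H},\mathcal{K})$ with $\sum_y\mathcal{G}_{(x,y)}=\mathcal{I}_x$ for all $x$ and $\sum_x\mathsf{A}^{\mathcal{G}}(x,y)=\mathsf{B}(y)$ for all $y$. *)

theory Defs
  imports Complex_Main "HOL-Library.Complex_Order"
begin

text \<open>Finite-dimensional Hilbert spaces are modelled as C^'h for a finite type 'h.
  Operators (matrices) from C^'b to C^'a are functions 'a => 'b => complex.\<close>

type_synonym ('a,'b) cmat = "'a \<Rightarrow> 'b \<Rightarrow> complex"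

definition mmult :: "('a,'b::finite) cmat \<Rightarrow> ('b,'c) cmat \<Rightarrow> ('a,'c) cmat" where
  "mmult M N = (\<lambda>i j. \<Sum>k\<in>UNIV. M i k * N k j)"

definition adj :: "('a,'b) cmat \<Rightarrow> ('b,'a) cmat" where
  "adj M = (\<lambda>i j. cnj (M j i))"

definition tr :: "('a::finite,'a) cmat \<Rightarrow> complex" where
  "tr M = (\<Sum>i\<in>UNIV. M i i)"

definition ident :: "('a,'a) cmat" where
  "ident = (\<lambda>i j. if i = j then 1 else 0)"

definition psd_on :: "'a set \<Rightarrow> ('a,'a) cmat \<Rightarrow> bool" where
  "psd_on S M \<longleftrightarrow> (\<forall>v :: 'a \<Rightarrow> complex. 0 \<le> (\<Sum>i\<in>S. \<Sum>j\<in>S. cnj (v i) * M i j * v j))"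

definition psd :: "('a::finite,'a) cmat \<Rightarrow> bool" where
  "psd M \<longleftrightarrow> psd_on UNIV M"

definition lin_map :: "(('a,'a) cmat \<Rightarrow> ('b,'b) cmat) \<Rightarrow> bool" where
  "lin_map \<Phi> \<longleftrightarrow> (\<forall>c X Y. \<Phi> (\<lambda>i j. c * X i j + Y i j) = (\<lambda>i j. c * \<Phi> X i j + \<Phi> Y i j))"

text \<open>Complete positivity: id_n (x) Phi is positive for every n, written with block
  matrices on the index set {..<n} x 'a (block (i,j) = operator on C^'a).\<close>
definition completely_positive :: "(('a::finite,'a) cmat \<Rightarrow> ('b::finite,'b) cmat) \<Rightarrow> bool" where
  "completely_positive \<Phi> \<longleftrightarrow> lin_map \<Phi> \<and>
     (\<forall>(n::nat) (X :: (nat \<times> 'a, nat \<times> 'a) cmat).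
        psd_on ({..<n} \<times> UNIV) X \<longrightarrow>
        psd_on ({..<n} \<times> UNIV)
          (\<lambda>(i,k) (j,l). \<Phi> (\<lambda>k' l'. X (i,k') (j,l')) k l))"

definition trace_nonincreasing :: "(('a::finite,'a) cmat \<Rightarrow> ('b::finite,'b) cmat) \<Rightarrow> bool" where
  "trace_nonincreasing \<Phi> \<longleftrightarrow> (\<forall>\<rho>. psd \<rho> \<longrightarrow> tr (\<Phi> \<rho>) \<le> tr \<rho>)"

definition is_povm :: "('x::finite \<Rightarrow> ('a::finite,'a) cmat) \<Rightarrow> bool" where
  "is_povm A \<longleftrightarrow> (\<forall>x. psd (A x)) \<and> (\<lambda>i j. \<Sum>x\<in>UNIV. A x i j) = ident"

definition is_instrument :: "('x::finite \<Rightarrow> ('a::finite,'a) cmat \<Rightarrow> ('b::finite,'b) cmat) \<Rightarrow> bool" where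
  "is_instrument I \<longleftrightarrow> (\<forall>x. completely_positive (I x) \<and> trace_nonincreasing (I x)) \<and>
     (\<forall>\<rho>. tr (\<lambda>i j. \<Sum>x\<in>UNIV. I x \<rho> i j) = tr \<rho>)"

definition induced_povm :: "('x \<Rightarrow> ('a::finite,'a) cmat \<Rightarrow> ('b::finite,'b) cmat) \<Rightarrow> 'x \<Rightarrow> ('a,'a) cmat" where
  "induced_povm I x = (THE A. \<forall>\<rho>. tr (mmult A \<rho>) = tr (I x \<rho>))"

definition indecomposable :: "('x \<Rightarrow> ('a::finite,'a) cmat \<Rightarrow> ('b::finite,'b) cmat) \<Rightarrow> bool" where
  "indecomposable I \<longleftrightarrow> (\<forall>x. I x \<noteq> (\<lambda>\<rho>. (\<lambda>i j. 0)) \<longrightarrow>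
      (\<exists>K :: ('b,'a) cmat. \<forall>\<rho>. I x \<rho> = mmult (mmult K \<rho>) (adj K)))"

definition postproc_le :: "('y::finite \<Rightarrow> ('a,'a) cmat) \<Rightarrow> ('x::finite \<Rightarrow> ('a,'a) cmat) \<Rightarrow> bool" where
  "postproc_le B A \<longleftrightarrow> (\<exists>\<nu> :: 'x \<Rightarrow> 'y \<Rightarrow> real.
     (\<forall>x y. 0 \<le> \<nu> x y) \<and> (\<forall>x. (\<Sum>y\<in>UNIV. \<nu> x y) = 1) \<and>
     (\<forall>y. B y = (\<lambda>i j. \<Sum>x\<in>UNIV. complex_of_real (\<nu> x y) * A x i j)))"

definition compatible ::
  "('x::finite \<Rightarrow> ('a::finite,'a) cmat \<Rightarrow> ('b::finite,'b) cmat) \<Rightarrow> ('y::finite \<Rightarrow> ('a,'a) cmat) \<Rightarrow> bool" where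
  "compatible I B \<longleftrightarrow> (\<exists>G :: 'x \<times> 'y \<Rightarrow> ('a,'a) cmat \<Rightarrow> ('b,'b) cmat.
     is_instrument G \<and>
     (\<forall>x. (\<lambda>\<rho> i j. \<Sum>y\<in>UNIV. G (x,y) \<rho> i j) = I x) \<and>
     (\<forall>y. (\<lambda>i j. \<Sum>x\<in>UNIV. induced_povm G (x,y) i j) = B y))"

end

theory Submission
  imports Defs
begin

text \<open>If \<open>G\<close> is a joint instrument for \<open>I\<close> and \<open>B\<close>, then for each outcome \<open>x\<close> the
  completely positive maps \<open>G (x,y)\<close> sum to \<open>I x\<close>. Their Choi matrices are therefore positive
  and dominated by the Choi matrix of \<open>I x\<close>, which for \<open>I x \<rho> = K \<rho> K\<^sup>*\<close> is the rank-one
  matrix \<open>v v\<^sup>*\<close>. A positive matrix below \<open>v v\<^sup>*\<close> is a nonnegative multiple of it, so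
  \<open>G (x,y) = \<nu> x y \<cdot> I x\<close> for a stochastic matrix \<open>\<nu>\<close>, and summing the induced POVMs over \<open>x\<close>
  gives \<open>B y = \<Sum>\<^sub>x \<nu> x y \<cdot> A\<^sup>I x\<close>. Conversely, \<open>G (x,y) = \<nu> x y \<cdot> I x\<close> is a joint
  instrument for every stochastic \<open>\<nu>\<close>.\<close>

definition sesq :: "('i::finite,'i) cmat \<Rightarrow> ('i \<Rightarrow> complex) \<Rightarrow> ('i \<Rightarrow> complex) \<Rightarrow> complex" where
  "sesq M w u = (\<Sum>i\<in>UNIV. \<Sum>j\<in>UNIV. cnj (w i) * M i j * u j)"

definition braket :: "('i::finite \<Rightarrow> complex) \<Rightarrow> ('i \<Rightarrow> complex) \<Rightarrow> complex" where
  "braket w v = (\<Sum>i\<in>UNIV. cnj (w i) * v i)"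

definition basis_vec :: "'i \<Rightarrow> 'i \<Rightarrow> complex" where
  "basis_vec a = (\<lambda>i. if i = a then 1 else 0)"

lemma sesq_add_left: "sesq M (\<lambda>i. w i + c * w' i) u = sesq M w u + cnj c * sesq M w' u"
  unfolding sesq_def by (simp add: algebra_simps sum.distrib sum_distrib_left)

lemma sesq_add_right: "sesq M w (\<lambda>i. u i + c * u' i) = sesq M w u + c * sesq M w u'"
  unfolding sesq_def by (simp add: algebra_simps sum.distrib sum_distrib_left)

lemma braket_add_left: "braket (\<lambda>i. w i + c * w' i) v = braket w v + cnj c * braket w' v"
  unfolding braket_def by (simp add: algebra_simps sum.distrib sum_distrib_left)

lemma sesq_basis_vec: "sesq M (basis_vec a) (basis_vec b) = M a b"
  unfolding sesq_def basis_vec_def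
  by (simp add: if_distrib[of cnj] if_distrib[of "\<lambda>x. x * _"] if_distrib[of "\<lambda>x. _ * x"] cong: if_cong)

lemma braket_basis_vec: "braket (basis_vec a) v = v a"
  unfolding braket_def basis_vec_def by (simp add: if_distrib[of cnj] if_distrib[of "\<lambda>x. x * _"] cong: if_cong)

lemma sesq_outer: "sesq (\<lambda>i j. v i * cnj (v j)) w u = braket w v * cnj (braket u v)"
  unfolding sesq_def braket_def cnj_sum sum_product by (intro sum.cong refl) (simp add: mult_ac)

lemma sesq_sum: "sesq (\<lambda>i j. \<Sum>y\<in>A. M y i j) w u = (\<Sum>y\<in>A. sesq (M y) w u)"
  unfolding sesq_def by (simp add: sum_distrib_left sum_distrib_right sum.swap[of _ A])

lemma affine_nonneg_imp_slope_zero: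
  fixes a c :: real
  assumes "\<And>r. 0 \<le> r * a + c" shows "a = 0"
proof (rule ccontr)
  assume "a \<noteq> 0"
  have "0 \<le> (- (\<bar>c\<bar> + 1) / a) * a + c" by (rule assms)
  also have "\<dots> = - (\<bar>c\<bar> + 1) + c" using \<open>a \<noteq> 0\<close> by simp
  finally show False by linarith
qed

lemma conj_affine_nonneg_imp_coeffs_zero:
  fixes b b' c :: complex
  assumes "\<And>s. 0 \<le> cnj s * b + s * b' + c" shows "b = 0 \<and> b' = 0"
proof -
  have real_dir: "0 \<le> r * (Re b + Re b') + Re c \<and> r * (Im b + Im b') + Im c = 0" for r
    using assms[of "complex_of_real r"] by (simp add: less_eq_complex_def algebra_simps)
  have imag_dir: "0 \<le> r * (Im b - Im b') + Re c \<and> r * (Re b' - Re b) + Im c = 0" for r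
    using assms[of "\<i> * complex_of_real r"] by (simp add: less_eq_complex_def algebra_simps)
  have "Re b + Re b' = 0" by (rule affine_nonneg_imp_slope_zero) (use real_dir in blast)
  moreover have "Im b - Im b' = 0" by (rule affine_nonneg_imp_slope_zero) (use imag_dir in blast)
  moreover have "Im b + Im b' = 0" using real_dir[of 1] real_dir[of 0] by simp
  moreover have "Re b' - Re b = 0" using imag_dir[of 1] imag_dir[of 0] by simp
  ultimately show ?thesis by (simp add: complex_eq_iff)
qed

lemma sesq_null_vector:
  assumes psd: "\<And>v. 0 \<le> sesq M v v" and null: "sesq M w w = 0"
  shows "sesq M w u = 0 \<and> sesq M u w = 0"
proof -
  have "0 \<le> cnj s * sesq M w u + s * sesq M u w + sesq M u u" for s
  proof -
    have "sesq M (\<lambda>i. u i + s * w i) (\<lambda>i. u i + s * w i)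
        = sesq M u u + s * sesq M u w + cnj s * (sesq M w u + s * sesq M w w)"
      by (simp add: sesq_add_left sesq_add_right)
    then show ?thesis using psd[of "\<lambda>i. u i + s * w i"] null by (simp add: algebra_simps)
  qed
  then show ?thesis using conj_affine_nonneg_imp_coeffs_zero by blast
qed

lemma cnj_braket: "cnj (braket w v) = braket v w"
  unfolding braket_def cnj_sum by (simp add: mult.commute)

lemma braket_self: "braket v v = complex_of_real (\<Sum>i\<in>UNIV. (cmod (v i))\<^sup>2)"
  unfolding braket_def of_real_sum
  by (rule sum.cong[OF refl], subst complex_norm_square) (simp add: mult.commute)

lemma braket_self_eq_zero_iff: "braket v v = 0 \<longleftrightarrow> v = (\<lambda>i. 0)"
proof -
  have "braket v v = 0 \<longleftrightarrow> (\<Sum>i\<in>UNIV. (cmod (v i))\<^sup>2) = 0"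
    by (simp only: braket_self of_real_eq_0_iff)
  also have "\<dots> \<longleftrightarrow> (\<forall>i. v i = 0)" by (simp add: sum_nonneg_eq_0_iff)
  finally show ?thesis by (simp add: fun_eq_iff)
qed

lemma braket_orthogonal_part:
  assumes "braket v v \<noteq> 0"
  shows "braket (\<lambda>i. w i + (- (braket v w / braket v v)) * v i) v = 0"
proof -
  have "cnj (braket v v) = braket v v" by (simp add: cnj_braket)
  then show ?thesis using assms by (simp only: braket_add_left) (simp add: cnj_braket)
qed

lemma sesq_orthogonal_to_dominating_vector:
  assumes psd: "\<And>w. 0 \<le> sesq M w w"
    and dom: "\<And>w. sesq M w w \<le> braket w v * cnj (braket w v)"
    and "braket w v = 0"
  shows "sesq M w u = 0 \<and> sesq M u w = 0"
  using psd[of w] dom[of w] assms(3) by (intro sesq_null_vector psd) (simp add: antisym)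

lemma sesq_dominated_by_rank_one:
  assumes psd: "\<And>w. 0 \<le> sesq M w w"
    and dom: "\<And>w. sesq M w w \<le> braket w v * cnj (braket w v)"
    and nonzero: "braket v v \<noteq> 0"
  shows "sesq M w u = braket w v * cnj (braket u v) * (sesq M v v / (braket v v * braket v v))"
proof -
  note orth = sesq_orthogonal_to_dominating_vector[OF psd dom braket_orthogonal_part[OF nonzero]]
  define a where "a = braket v w / braket v v"
  define b where "b = braket v u / braket v v"
  have w: "w = (\<lambda>i. (\<lambda>i. w i + (- a) * v i) i + a * v i)" by simp
  have u: "u = (\<lambda>i. (\<lambda>i. u i + (- b) * v i) i + b * v i)" by simp
  have "sesq M w u = cnj a * sesq M v u"
    using orth[of w u] by (subst w) (simp only: sesq_add_left a_def, simp)
  also have "sesq M v u = b * sesq M v v"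
    using orth[of u v] by (subst u) (simp only: sesq_add_right b_def, simp)
  finally show ?thesis
    using nonzero by (simp add: a_def b_def cnj_braket)
qed

lemma psd_dominated_by_rank_one:
  fixes M :: "('i::finite,'i) cmat"
  assumes psd: "\<And>w. 0 \<le> sesq M w w"
    and dom: "\<And>w. sesq M w w \<le> braket w v * cnj (braket w v)"
  shows "\<exists>t\<ge>0. \<forall>i j. M i j = complex_of_real t * v i * cnj (v j)"
proof (cases "braket v v = 0")
  case True
  then have "v = (\<lambda>i. 0)" by (simp only: braket_self_eq_zero_iff)
  then have "M i j = 0" for i j
    using sesq_orthogonal_to_dominating_vector[OF psd dom, of "basis_vec i" "basis_vec j"]
    by (simp add: sesq_basis_vec braket_def)
  then show ?thesis by auto
next
  case False
  define t where "t = Re (sesq M v v / (braket v v * braket v v))"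
  have "sesq M v v / (braket v v * braket v v) = complex_of_real t"
    using psd[of v] by (simp add: t_def braket_self less_eq_complex_def complex_eq_iff)
  moreover have "0 \<le> t"
    using psd[of v] by (simp add: t_def braket_self less_eq_complex_def)
  ultimately show ?thesis
    using sesq_dominated_by_rank_one[OF psd dom False, of "basis_vec i" "basis_vec j" for i j]
    by (auto simp: sesq_basis_vec braket_basis_vec mult_ac)
qed

definition matrix_unit :: "'a \<Rightarrow> 'b \<Rightarrow> ('a,'b) cmat" where
  "matrix_unit a b = (\<lambda>i j. if i = a \<and> j = b then 1 else 0)"

lemma lin_map_zero: "lin_map \<Phi> \<Longrightarrow> \<Phi> (\<lambda>i j. 0) = (\<lambda>i j. 0)"
  unfolding lin_map_def
  by (erule allE[of _ "-1"], erule allE[of _ "\<lambda>i j. 0"], erule allE[of _ "\<lambda>i j. 0"]) simp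

lemma lin_map_sum:
  assumes "lin_map \<Phi>" "finite S"
  shows "\<Phi> (\<lambda>i j. \<Sum>s\<in>S. c s * X s i j) = (\<lambda>i j. \<Sum>s\<in>S. c s * \<Phi> (X s) i j)"
  using assms(2)
proof (induction S rule: finite_induct)
  case empty
  then show ?case using lin_map_zero[OF assms(1)] by simp
next
  case (insert s S)
  then show ?case
    using assms(1)[unfolded lin_map_def, rule_format, of "c s" "X s" "\<lambda>i j. \<Sum>s\<in>S. c s * X s i j"]
    by simp
qed

lemma matrix_unit_expansion:
  "(\<rho> :: ('a::finite,'b::finite) cmat) = (\<lambda>i j. \<Sum>p\<in>UNIV. \<rho> (fst p) (snd p) * matrix_unit (fst p) (snd p) i j)"
proof (intro ext)
  fix i j
  have "(\<Sum>p\<in>UNIV. \<rho> (fst p) (snd p) * matrix_unit (fst p) (snd p) i j)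
      = (\<Sum>p\<in>UNIV. if p = (i,j) then \<rho> i j else 0)"
    by (rule sum.cong) (auto simp: matrix_unit_def)
  then show "\<rho> i j = (\<Sum>p\<in>UNIV. \<rho> (fst p) (snd p) * matrix_unit (fst p) (snd p) i j)" by simp
qed

lemma lin_map_expansion:
  fixes \<Phi> :: "('a::finite,'a) cmat \<Rightarrow> ('b,'b) cmat"
  assumes "lin_map \<Phi>"
  shows "\<Phi> \<rho> = (\<lambda>k l. \<Sum>p\<in>UNIV. \<rho> (fst p) (snd p) * \<Phi> (matrix_unit (fst p) (snd p)) k l)"
  using arg_cong[OF matrix_unit_expansion, of \<Phi> \<rho>] lin_map_sum[OF assms finite_UNIV] by simp

lemma lin_map_kraus: "lin_map (\<lambda>\<rho>. mmult (mmult K \<rho>) (adj K))"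
  unfolding lin_map_def mmult_def
  by (simp add: algebra_simps sum.distrib sum_distrib_left)

lemma tr_mmult_matrix_unit: "tr (mmult A (matrix_unit j i)) = A i j"
proof -
  have "tr (mmult A (matrix_unit j i)) = (\<Sum>a\<in>UNIV. if a = i then A i j else 0)"
    unfolding tr_def mmult_def matrix_unit_def
    by (rule sum.cong) (auto simp: if_distrib[of "\<lambda>x. _ * x"] cong: if_cong)
  then show ?thesis by simp
qed

lemma induced_povm_eqI:
  assumes "\<And>\<rho>. tr (mmult A \<rho>) = tr (I x \<rho>)"
  shows "induced_povm I x = A"
  unfolding induced_povm_def
proof (rule the_equality)
  fix A' assume "\<forall>\<rho>. tr (mmult A' \<rho>) = tr (I x \<rho>)"
  then have "tr (mmult A' (matrix_unit j i)) = tr (mmult A (matrix_unit j i))" for i j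
    using assms by simp
  then show "A' = A" by (intro ext) (simp add: tr_mmult_matrix_unit)
qed (use assms in blast)

lemma tr_mmult_induced_povm:
  assumes "lin_map (I x)"
  shows "tr (mmult (induced_povm I x) \<rho>) = tr (I x \<rho>)"
proof -
  define A where "A = (\<lambda>i j. tr (I x (matrix_unit j i)))"
  have "tr (mmult A \<rho>) = tr (I x \<rho>)" for \<rho>
  proof -
    have "tr (I x \<rho>) = (\<Sum>p\<in>UNIV. \<rho> (fst p) (snd p) * tr (I x (matrix_unit (fst p) (snd p))))"
      unfolding tr_def by (subst lin_map_expansion[OF assms]) (subst sum.swap, simp add: sum_distrib_left)
    also have "\<dots> = (\<Sum>k\<in>UNIV. \<Sum>i\<in>UNIV. \<rho> k i * tr (I x (matrix_unit k i)))"
      by (simp add: sum.cartesian_product UNIV_Times_UNIV[symmetric] case_prod_beta del: UNIV_Times_UNIV)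
    also have "\<dots> = tr (mmult A \<rho>)"
      unfolding tr_def mmult_def A_def by (subst sum.swap) (simp add: mult.commute)
    finally show ?thesis by simp
  qed
  then show ?thesis using induced_povm_eqI[of A I x] by simp
qed

lemma induced_povm_scale:
  assumes "lin_map (I x)" "G p = (\<lambda>\<rho> i j. complex_of_real c * I x \<rho> i j)"
  shows "induced_povm G p = (\<lambda>i j. complex_of_real c * induced_povm I x i j)"
proof (rule induced_povm_eqI)
  fix \<rho>
  have "tr (mmult (\<lambda>i j. c * A i j) B) = c * tr (mmult A B)" for c A and B :: "('a::finite,'a) cmat"
    unfolding tr_def mmult_def by (simp add: sum_distrib_left mult_ac)
  moreover have "tr (\<lambda>i j. c * A i j) = c * tr A" for c and A :: "('b::finite,'b) cmat"
    unfolding tr_def by (simp add: sum_distrib_left)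
  ultimately show "tr (mmult (\<lambda>i j. complex_of_real c * induced_povm I x i j) \<rho>) = tr (G p \<rho>)"
    using tr_mmult_induced_povm[of I x \<rho>] assms by simp
qed

definition choi :: "(('a::finite,'a) cmat \<Rightarrow> ('b,'b) cmat) \<Rightarrow> ('a \<times> 'b, 'a \<times> 'b) cmat" where
  "choi \<Phi> = (\<lambda>p q. \<Phi> (matrix_unit (fst p) (fst q)) (snd p) (snd q))"

lemma psd_on_outer: "psd_on S (\<lambda>p q. u p * cnj (u q))"
  unfolding psd_on_def
proof
  fix v :: "'a \<Rightarrow> complex"
  define z where "z = (\<Sum>q\<in>S. cnj (u q) * v q)"
  have "(\<Sum>p\<in>S. \<Sum>q\<in>S. cnj (v p) * (u p * cnj (u q)) * v q) = cnj z * z"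
    unfolding z_def cnj_sum sum_product by (intro sum.cong refl) (simp add: mult_ac)
  then show "0 \<le> (\<Sum>p\<in>S. \<Sum>q\<in>S. cnj (v p) * (u p * cnj (u q)) * v q)"
    by (simp add: less_eq_complex_def)
qed

lemma choi_psd:
  fixes \<Phi> :: "('a::finite,'a) cmat \<Rightarrow> ('b::finite,'b) cmat"
  assumes "completely_positive \<Phi>"
  shows "0 \<le> sesq (choi \<Phi>) w w"
proof -
  define n where "n = card (UNIV :: 'a set)"
  obtain h where h: "bij_betw h {..<n} (UNIV :: 'a set)"
    using ex_bij_betw_nat_finite[of "UNIV :: 'a set"] by (auto simp: atLeast0LessThan n_def)
  define F where "F p q = cnj (w p) * choi \<Phi> p q * w q" for p q
  \<comment> \<open>Complete positivity applied to the positive block matrix \<open>u u\<^sup>*\<close>, whose blocks are the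
    matrix units, yields the Choi matrix up to the reindexing \<open>h\<close>.\<close>
  define u :: "nat \<times> 'a \<Rightarrow> complex" where "u p = (if snd p = h (fst p) then 1 else 0)" for p
  have "psd_on ({..<n} \<times> UNIV) (\<lambda>(i,k) (j,l). \<Phi> (\<lambda>k' l'. u (i,k') * cnj (u (j,l'))) k l)"
    using assms psd_on_outer unfolding completely_positive_def by blast
  moreover have "(\<lambda>k' l'. u (i,k') * cnj (u (j,l'))) = matrix_unit (h i) (h j)" for i j
    by (simp add: u_def matrix_unit_def fun_eq_iff)
  moreover have "(\<lambda>(i,k) (j,l). \<Phi> (matrix_unit (h i) (h j)) k l)
      = (\<lambda>p q. choi \<Phi> (map_prod h id p) (map_prod h id q))"
    by (auto simp: choi_def fun_eq_iff)
  ultimately have "psd_on ({..<n} \<times> UNIV) (\<lambda>p q. choi \<Phi> (map_prod h id p) (map_prod h id q))"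
    by simp
  then have "0 \<le> (\<Sum>p\<in>{..<n} \<times> UNIV. \<Sum>q\<in>{..<n} \<times> UNIV.
      F (map_prod h id p) (map_prod h id q))"
    unfolding psd_on_def F_def by (auto elim!: allE[of _ "\<lambda>p. w (map_prod h id p)"])
  moreover have g: "bij_betw (map_prod h id) ({..<n} \<times> UNIV) UNIV"
    using bij_betw_map_prod[OF h bij_betw_id[of UNIV]] by simp
  ultimately show ?thesis
    unfolding sesq_def F_def[symmetric]
    by (simp add: sum.reindex_bij_betw[OF g, of "F _"] sum.reindex_bij_betw[OF g, of "\<lambda>p. \<Sum>q\<in>UNIV. F p q"])
qed

lemma choi_kraus:
  "choi (\<lambda>\<rho>. mmult (mmult K \<rho>) (adj K)) = (\<lambda>p q. K (snd p) (fst p) * cnj (K (snd q) (fst q)))"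
proof (intro ext)
  fix p q :: "'a \<times> 'b"
  have "mmult K (matrix_unit (fst p) (fst q)) k m = (if m = fst q then K k (fst p) else 0)" for k m
    unfolding mmult_def matrix_unit_def by (simp add: if_distrib[of "\<lambda>x. _ * x"] cong: if_cong)
  then show "choi (\<lambda>\<rho>. mmult (mmult K \<rho>) (adj K)) p q = K (snd p) (fst p) * cnj (K (snd q) (fst q))"
    unfolding choi_def mmult_def[of "mmult K _"]
    by (simp add: adj_def if_distrib[of "\<lambda>x. x * _"] cong: if_cong)
qed

lemma lin_map_eq_scale_if_choi_eq_scale:
  assumes "lin_map \<Phi>" "lin_map \<Psi>" "choi \<Phi> = (\<lambda>p q. c * choi \<Psi> p q)"
  shows "\<Phi> = (\<lambda>\<rho> i j. c * \<Psi> \<rho> i j)"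
proof
  fix \<rho>
  have "\<Phi> (matrix_unit a b) k l = c * \<Psi> (matrix_unit a b) k l" for a b k l
    using fun_cong[OF fun_cong[OF assms(3), of "(a,k)"], of "(b,l)"] by (simp add: choi_def)
  then show "\<Phi> \<rho> = (\<lambda>i j. c * \<Psi> \<rho> i j)"
    by (subst lin_map_expansion[OF assms(1)], subst lin_map_expansion[OF assms(2)])
      (simp add: sum_distrib_left mult_ac)
qed

lemma psd_iff_sesq: "psd M \<longleftrightarrow> (\<forall>w. 0 \<le> sesq M w w)"
  unfolding psd_def psd_on_def sesq_def ..

lemma psd_tr_nonneg: "psd M \<Longrightarrow> 0 \<le> tr M"
  unfolding tr_def psd_iff_sesq by (metis sesq_basis_vec sum_nonneg)

lemma sum_single_block: "(\<Sum>p\<in>{..<1::nat} \<times> UNIV. f p) = (\<Sum>k\<in>UNIV. f (0, k))"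
proof -
  have block: "{..<1::nat} \<times> UNIV = Pair 0 ` UNIV" by auto
  show ?thesis by (simp only: block) (simp add: sum.reindex inj_on_def)
qed

lemma completely_positive_imp_psd:
  fixes \<Phi> :: "('a::finite,'a) cmat \<Rightarrow> ('b::finite,'b) cmat"
  assumes "completely_positive \<Phi>" "psd \<rho>"
  shows "psd (\<Phi> \<rho>)"
proof -
  define X :: "(nat \<times> 'a, nat \<times> 'a) cmat" where "X p q = \<rho> (snd p) (snd q)" for p q
  have "psd_on ({..<1} \<times> UNIV) X"
    using assms(2) unfolding psd_on_def psd_def sum_single_block X_def
    by (auto elim!: allE[of _ "\<lambda>k. _ (0, k)"])
  then have "psd_on ({..<1} \<times> UNIV) (\<lambda>(i,k) (j,l). \<Phi> (\<lambda>k' l'. X (i,k') (j,l')) k l)"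
    using assms(1) unfolding completely_positive_def by blast
  then have "0 \<le> (\<Sum>k\<in>UNIV. \<Sum>l\<in>UNIV. cnj (v k) * \<Phi> \<rho> k l * v l)" for v
    unfolding psd_on_def sum_single_block X_def by (auto dest: spec[of _ "\<lambda>p. v (snd p)"])
  then show ?thesis unfolding psd_def psd_on_def by blast
qed

lemma completely_positive_summand_of_kraus_map:
  fixes \<Phi> :: "'y::finite \<Rightarrow> ('h::finite,'h) cmat \<Rightarrow> ('k::finite,'k) cmat"
  assumes cp: "\<And>y. completely_positive (\<Phi> y)"
    and sum: "(\<lambda>\<rho> i j. \<Sum>y\<in>UNIV. \<Phi> y \<rho> i j) = (\<lambda>\<rho>. mmult (mmult K \<rho>) (adj K))"
  shows "\<exists>t\<ge>0. \<Phi> y = (\<lambda>\<rho> i j. complex_of_real t * mmult (mmult K \<rho>) (adj K) i j)"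
proof -
  define v :: "'h \<times> 'k \<Rightarrow> complex" where "v p = K (snd p) (fst p)" for p
  have "(\<lambda>p q. \<Sum>y'\<in>UNIV. choi (\<Phi> y') p q) = choi (\<lambda>\<rho>. mmult (mmult K \<rho>) (adj K))"
    unfolding sum[symmetric] choi_def ..
  also have "\<dots> = (\<lambda>p q. v p * cnj (v q))" by (simp add: choi_kraus v_def)
  finally have choi_sum: "(\<lambda>p q. \<Sum>y'\<in>UNIV. choi (\<Phi> y') p q) = (\<lambda>p q. v p * cnj (v q))" .
  have "sesq (choi (\<Phi> y)) w w \<le> braket w v * cnj (braket w v)" for w
  proof -
    have "sesq (choi (\<Phi> y)) w w \<le> (\<Sum>y'\<in>UNIV. sesq (choi (\<Phi> y')) w w)"
      by (rule member_le_sum) (simp_all add: choi_psd cp)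
    also have "\<dots> = braket w v * cnj (braket w v)"
      by (simp only: sesq_sum[symmetric] choi_sum sesq_outer)
    finally show ?thesis .
  qed
  then obtain t where "t \<ge> 0" and "\<And>p q. choi (\<Phi> y) p q = complex_of_real t * v p * cnj (v q)"
    using psd_dominated_by_rank_one[of "choi (\<Phi> y)" v] choi_psd[OF cp] by blast
  then have "choi (\<Phi> y) = (\<lambda>p q. complex_of_real t * choi (\<lambda>\<rho>. mmult (mmult K \<rho>) (adj K)) p q)"
    by (simp add: choi_kraus v_def fun_eq_iff mult.assoc)
  moreover have "lin_map (\<Phi> y)" using cp completely_positive_def by blast
  ultimately show ?thesis
    using \<open>t \<ge> 0\<close> lin_map_eq_scale_if_choi_eq_scale[OF _ lin_map_kraus] by blast
qed

definition stochastic :: "('x \<Rightarrow> 'y::finite \<Rightarrow> real) \<Rightarrow> bool" where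
  "stochastic \<nu> \<longleftrightarrow> (\<forall>x y. 0 \<le> \<nu> x y) \<and> (\<forall>x. (\<Sum>y\<in>UNIV. \<nu> x y) = 1)"

definition refine_instrument ::
  "('x \<Rightarrow> 'y \<Rightarrow> real) \<Rightarrow> ('x \<Rightarrow> ('a,'a) cmat \<Rightarrow> ('b,'b) cmat) \<Rightarrow> 'x \<times> 'y \<Rightarrow> ('a,'a) cmat \<Rightarrow> ('b,'b) cmat" where
  "refine_instrument \<nu> I p = (\<lambda>\<rho> i j. complex_of_real (\<nu> (fst p) (snd p)) * I (fst p) \<rho> i j)"

lemma stochastic_le_one: "stochastic \<nu> \<Longrightarrow> \<nu> x y \<le> 1"
  unfolding stochastic_def using member_le_sum[of y UNIV "\<nu> x"] by auto

lemma psd_on_scale: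
  assumes "psd_on S M" "0 \<le> c"
  shows "psd_on S (\<lambda>i j. complex_of_real c * M i j)"
  unfolding psd_on_def
proof
  fix v :: "'a \<Rightarrow> complex"
  have "(\<Sum>i\<in>S. \<Sum>j\<in>S. cnj (v i) * (complex_of_real c * M i j) * v j)
      = complex_of_real c * (\<Sum>i\<in>S. \<Sum>j\<in>S. cnj (v i) * M i j * v j)"
    by (simp add: sum_distrib_left mult_ac)
  moreover have "0 \<le> complex_of_real c" using assms(2) by (simp add: less_eq_complex_def)
  ultimately show "0 \<le> (\<Sum>i\<in>S. \<Sum>j\<in>S. cnj (v i) * (complex_of_real c * M i j) * v j)"
    using assms(1) unfolding psd_on_def by simp
qed

lemma completely_positive_scale:
  assumes "completely_positive \<Phi>" "0 \<le> c"
  shows "completely_positive (\<lambda>\<rho> i j. complex_of_real c * \<Phi> \<rho> i j)"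
  unfolding completely_positive_def
proof (intro conjI allI impI)
  show "lin_map (\<lambda>\<rho> i j. complex_of_real c * \<Phi> \<rho> i j)"
    using assms(1) unfolding completely_positive_def lin_map_def by (simp add: algebra_simps)
  fix n and X :: "(nat \<times> 'a, nat \<times> 'a) cmat"
  assume "psd_on ({..<n} \<times> UNIV) X"
  then have "psd_on ({..<n} \<times> UNIV) (\<lambda>(i,k) (j,l). \<Phi> (\<lambda>k' l'. X (i,k') (j,l')) k l)"
    using assms(1) unfolding completely_positive_def by blast
  from psd_on_scale[OF this assms(2)]
  show "psd_on ({..<n} \<times> UNIV) (\<lambda>(i,k) (j,l). complex_of_real c * \<Phi> (\<lambda>k' l'. X (i,k') (j,l')) k l)"
    by (simp add: case_prod_beta')
qed

lemma refine_instrument_marginal: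
  assumes "stochastic \<nu>"
  shows "(\<lambda>\<rho> i j. \<Sum>y\<in>UNIV. refine_instrument \<nu> I (x,y) \<rho> i j) = I x"
  using assms unfolding refine_instrument_def stochastic_def
  by (simp add: sum_distrib_right[symmetric] flip: of_real_sum)

lemma is_instrument_refine:
  fixes I :: "'x::finite \<Rightarrow> ('a::finite,'a) cmat \<Rightarrow> ('b::finite,'b) cmat"
    and \<nu> :: "'x \<Rightarrow> 'y::finite \<Rightarrow> real"
  assumes inst: "is_instrument I" and \<nu>: "stochastic \<nu>"
  shows "is_instrument (refine_instrument \<nu> I)"
  unfolding is_instrument_def
proof (intro conjI allI)
  fix p :: "'x \<times> 'y"
  have cp: "completely_positive (I (fst p))" using inst is_instrument_def by blast
  show "completely_positive (refine_instrument \<nu> I p)"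
    unfolding refine_instrument_def using \<nu> by (simp add: completely_positive_scale cp stochastic_def)
  show "trace_nonincreasing (refine_instrument \<nu> I p)"
    unfolding trace_nonincreasing_def
  proof (intro allI impI)
    fix \<rho> :: "('a,'a) cmat" assume "psd \<rho>"
    have "tr (refine_instrument \<nu> I p \<rho>) = complex_of_real (\<nu> (fst p) (snd p)) * tr (I (fst p) \<rho>)"
      unfolding refine_instrument_def tr_def by (simp add: sum_distrib_left)
    also have "\<dots> \<le> tr (I (fst p) \<rho>)"
      using psd_tr_nonneg[OF completely_positive_imp_psd[OF cp \<open>psd \<rho>\<close>]] \<nu>
      by (auto simp: less_eq_complex_def stochastic_def stochastic_le_one mult_left_le_one_le)
    also have "\<dots> \<le> tr \<rho>"
      using inst \<open>psd \<rho>\<close> unfolding is_instrument_def trace_nonincreasing_def by blast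
    finally show "tr (refine_instrument \<nu> I p \<rho>) \<le> tr \<rho>" .
  qed
next
  fix \<rho> :: "('a,'a) cmat"
  have "(\<lambda>i j. \<Sum>p\<in>UNIV. refine_instrument \<nu> I p \<rho> i j)
      = (\<lambda>i j. \<Sum>x\<in>UNIV. \<Sum>y\<in>UNIV. refine_instrument \<nu> I (x,y) \<rho> i j)"
    by (simp add: sum.cartesian_product UNIV_Times_UNIV[symmetric] del: UNIV_Times_UNIV)
  also have "\<dots> = (\<lambda>i j. \<Sum>x\<in>UNIV. I x \<rho> i j)"
    using refine_instrument_marginal[OF \<nu>, of I] by (simp add: fun_eq_iff)
  finally show "tr (\<lambda>i j. \<Sum>p\<in>UNIV. refine_instrument \<nu> I p \<rho> i j) = tr \<rho>"
    using inst unfolding is_instrument_def by simp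
qed

lemma induced_povm_refine:
  assumes "lin_map (I x)"
  shows "induced_povm (refine_instrument \<nu> I) (x,y) = (\<lambda>i j. complex_of_real (\<nu> x y) * induced_povm I x i j)"
  by (rule induced_povm_scale[where I = I and x = x, OF assms]) (simp add: refine_instrument_def)

lemma indecomposable_kraus:
  fixes I :: "'x \<Rightarrow> ('h::finite,'h) cmat \<Rightarrow> ('k::finite,'k) cmat"
  assumes "indecomposable I"
  shows "\<exists>K. \<forall>x \<rho>. I x \<rho> = mmult (mmult (K x) \<rho>) (adj (K x))"
proof -
  have "\<exists>K :: ('k,'h) cmat. \<forall>\<rho>. I x \<rho> = mmult (mmult K \<rho>) (adj K)" for x
  proof (cases "I x = (\<lambda>\<rho> i j. 0)")
    case True
    then show ?thesis by (intro exI[of _ "\<lambda>i j. 0"]) (simp add: mmult_def adj_def)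
  next
    case False
    then show ?thesis using assms unfolding indecomposable_def by simp
  qed
  then show ?thesis by (rule choice[OF allI])
qed

lemma joint_instrument_of_kraus_instrument:
  fixes I :: "'x::finite \<Rightarrow> ('h::finite,'h) cmat \<Rightarrow> ('k::finite,'k) cmat"
    and G :: "'x \<times> 'y::finite \<Rightarrow> ('h,'h) cmat \<Rightarrow> ('k,'k) cmat"
  assumes kraus: "\<And>x \<rho>. I x \<rho> = mmult (mmult (K x) \<rho>) (adj (K x))"
    and G: "is_instrument G"
    and marginal: "\<And>x. (\<lambda>\<rho> i j. \<Sum>y\<in>UNIV. G (x,y) \<rho> i j) = I x"
  shows "\<exists>\<nu>. stochastic \<nu> \<and> G = refine_instrument \<nu> I"
proof -
  have "\<exists>t\<ge>0. G (x,y) = (\<lambda>\<rho> i j. complex_of_real t * I x \<rho> i j)" for x y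
  proof -
    have "completely_positive (G (x,y'))" for y' using G is_instrument_def by blast
    then show ?thesis
      using completely_positive_summand_of_kraus_map[of "\<lambda>y. G (x,y)" "K x" y] marginal[of x]
      unfolding kraus by blast
  qed
  then have "\<exists>T. \<forall>x y. 0 \<le> T x y \<and> G (x,y) = (\<lambda>\<rho> i j. complex_of_real (T x y) * I x \<rho> i j)"
    by (intro choice allI) blast
  then obtain T where T: "\<And>x y. 0 \<le> T x y"
    and G_T: "\<And>x y. G (x,y) = (\<lambda>\<rho> i j. complex_of_real (T x y) * I x \<rho> i j)"
    by blast
  \<comment> \<open>On outcomes with \<open>I x = 0\<close> the factors are arbitrary; replace them by a uniform row.\<close>
  define \<nu> where "\<nu> x y = (if I x = (\<lambda>\<rho> i j. 0) then 1 / real (card (UNIV :: 'y set)) else T x y)" for x y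
  have "G = refine_instrument \<nu> I"
    using G_T by (auto simp: refine_instrument_def \<nu>_def fun_eq_iff)
  moreover have "(\<Sum>y\<in>UNIV. \<nu> x y) = 1" for x
  proof (cases "I x = (\<lambda>\<rho> i j. 0)")
    case False
    then obtain \<rho> i j where nz: "I x \<rho> i j \<noteq> 0" by (meson ext)
    have "I x \<rho> i j = complex_of_real (\<Sum>y\<in>UNIV. T x y) * I x \<rho> i j"
      using fun_cong[OF fun_cong[OF fun_cong[OF marginal[of x], of \<rho>], of i], of j]
      by (simp add: G_T sum_distrib_right)
    then have "(\<Sum>y\<in>UNIV. T x y) = 1" using nz by (simp flip: of_real_sum)
    then show ?thesis using False by (simp add: \<nu>_def)
  qed (simp add: \<nu>_def)
  moreover have "0 \<le> \<nu> x y" for x y using T by (simp add: \<nu>_def)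
  ultimately show ?thesis unfolding stochastic_def by blast
qed

definition postprocess :: "('x::finite \<Rightarrow> 'y \<Rightarrow> real) \<Rightarrow> ('x \<Rightarrow> ('a,'a) cmat) \<Rightarrow> 'y \<Rightarrow> ('a,'a) cmat" where
  "postprocess \<nu> A y = (\<lambda>i j. \<Sum>x\<in>UNIV. complex_of_real (\<nu> x y) * A x i j)"

lemma postproc_le_iff_postprocess: "postproc_le B A \<longleftrightarrow> (\<exists>\<nu>. stochastic \<nu> \<and> B = postprocess \<nu> A)"
  unfolding postproc_le_def stochastic_def postprocess_def by (auto simp: fun_eq_iff)

lemma induced_povm_refine_marginal:
  assumes "is_instrument I"
  shows "(\<lambda>i j. \<Sum>x\<in>UNIV. induced_povm (refine_instrument \<nu> I) (x,y) i j) = postprocess \<nu> (induced_povm I) y"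
proof -
  have "lin_map (I x)" for x using assms by (simp add: is_instrument_def completely_positive_def)
  then show ?thesis by (simp add: induced_povm_refine postprocess_def)
qed

lemma compatible_postprocess:
  assumes "is_instrument I" "stochastic \<nu>"
  shows "compatible I (postprocess \<nu> (induced_povm I))"
  unfolding compatible_def
proof (intro exI[of _ "refine_instrument \<nu> I"] conjI allI)
qed (simp_all add: is_instrument_refine[OF assms] refine_instrument_marginal[OF assms(2)]
    induced_povm_refine_marginal[OF assms(1)])

theorem corollary7:
  fixes I :: "'x::finite \<Rightarrow> ('h::finite,'h) cmat \<Rightarrow> ('k::finite,'k) cmat"
    and B :: "'y::finite \<Rightarrow> ('h,'h) cmat"
  assumes "is_instrument I"
    and "indecomposable I"
    and "is_povm B"
  shows "compatible I B \<longleftrightarrow> postproc_le B (induced_povm I)"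
proof
  assume "compatible I B"
  then obtain G :: "'x \<times> 'y \<Rightarrow> ('h,'h) cmat \<Rightarrow> ('k,'k) cmat"
    where "is_instrument G" and "\<And>x. (\<lambda>\<rho> i j. \<Sum>y\<in>UNIV. G (x,y) \<rho> i j) = I x"
      and B: "\<And>y. (\<lambda>i j. \<Sum>x\<in>UNIV. induced_povm G (x,y) i j) = B y"
    unfolding compatible_def by blast
  moreover obtain K where "\<And>x \<rho>. I x \<rho> = mmult (mmult (K x) \<rho>) (adj (K x))"
    using indecomposable_kraus[OF assms(2)] by blast
  ultimately obtain \<nu> where "stochastic \<nu>" and G: "G = refine_instrument \<nu> I"
    using joint_instrument_of_kraus_instrument[of I K G] by blast
  moreover have "B y = postprocess \<nu> (induced_povm I) y" for y
    using B[of y] induced_povm_refine_marginal[OF assms(1), of \<nu> y] unfolding G by simp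
  ultimately show "postproc_le B (induced_povm I)"
    unfolding postproc_le_iff_postprocess by blast
next
  assume "postproc_le B (induced_povm I)"
  then show "compatible I B"
    using compatible_postprocess[OF assms(1)] unfolding postproc_le_iff_postprocess by blast
qed

end
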